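(* Let $\lambda>0$ and set $\Lambda=-3\lambda$. Let $m,a,q\in\mathbb{R}$ be parameters with $\lambda a^2<1$, put $\Xi=1-\lambda a^2>0$ and $$\Delta_r=(r^2+a^2)(1+\lambda r^2)-2mr+q^2 .$$ Assume that the Kerr-Newman-anti-de Sitter solution with these parameters is a black hole, i.e. that the quartic $\Delta_r$ has real zeros, namely either two distinct real zeros $r_1<r_2$ or one real double zero $r_1=r_2$. Define the angular momentum $J=ma/\Xi^2$, the electric charge $Q=q/\Xi$, and the reduced areas of the Cauchy and event horizons $$\bar A_{\mathrm C}=\frac{r_1^2+a^2}{\Xi},\qquad \bar A_{\mathrm E}=\frac{r_2^2+a^2}{\Xi}.$$ The actual horizon areas are $A_{\mathrm C}=4\pi\bar A_{\mathrm C}$ and $A_{\mathrm E}=4\pi\bar A_{\mathrm E}$. Then $$4J^2+Q^4=\bar A_{\mathrm C}\bar A_{\mathrm E}\Big[1+2\lambda\big(\bar A_{\mathrm C}+\bar A_{\mathrm E}+Q^2\big)+\lambda^2\big(\bar A_{\mathrm C}^2+\bar A_{\mathrm C}\bar A_{\mathrm E}+\bar A_{\mathrm E}^2\big)\Big].$$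
   Context: The Kerr-Newman-anti-de Sitter (KN-AdS) solution with cosmological constant $\Lambda=-3\lambda<0$ is written in Boyer-Lindquist-type coordinates $(r,\theta,\phi,t)$ as $$\mathrm ds^2=\varrho^2\Big(\frac{\mathrm dr^2}{\Delta_r}+\frac{\mathrm d\theta^2}{\Delta_\theta}\Big)+\frac{\Delta_\theta\sin^2\theta}{\Xi^2\varrho^2}\big[a\,\mathrm dt-(r^2+a^2)\,\mathrm d\phi\big]^2-\frac{\Delta_r}{\Xi^2\varrho^2}\big(\mathrm dt-a\sin^2\theta\,\mathrm d\phi\big)^2 .$$ Here $\varrho^2=r^2+a^2\cos^2\theta$ and $\Delta_\theta=1-\lambda a^2\cos^2\theta$. The electromagnetic potential is $A=-\frac{qr}{\varrho^2}(\mathrm dt-a\sin^2\theta\,\mathrm d\phi)$. The parameter $m$ is the mass parameter, $a$ the rotation parameter and $q$ the charge parameter. The mass is $M=m/\Xi^2$. For $\lambda>0$ the quartic $\Delta_r$ has at most two real zeros. The larger zero $r_2$ gives the event horizon and the smaller zero $r_1$ gives the Cauchy horizon. The black hole is degenerate exactly when $r_1=r_2$. *)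

theory Defs
  imports Complex_Main
begin

definition KNAdS_Delta_r :: "real \<Rightarrow> real \<Rightarrow> real \<Rightarrow> real \<Rightarrow> real \<Rightarrow> real" where
  "KNAdS_Delta_r lam m a q r = (r^2 + a^2) * (1 + lam * r^2) - 2 * m * r + q^2"

definition KNAdS_Xi :: "real \<Rightarrow> real \<Rightarrow> real" where
  "KNAdS_Xi lam a = 1 - lam * a^2"

definition KNAdS_J :: "real \<Rightarrow> real \<Rightarrow> real \<Rightarrow> real" where
  "KNAdS_J lam m a = m * a / (KNAdS_Xi lam a)^2"

definition KNAdS_Q :: "real \<Rightarrow> real \<Rightarrow> real \<Rightarrow> real" where
  "KNAdS_Q lam a q = q / KNAdS_Xi lam a"

definition KNAdS_reduced_area :: "real \<Rightarrow> real \<Rightarrow> real \<Rightarrow> real" where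
  "KNAdS_reduced_area lam a r = (r^2 + a^2) / KNAdS_Xi lam a"

end

theory Submission
  imports Defs
begin

text \<open>
  The two horizon radii are zeros of the quartic \<open>\<Delta>\<^sub>r\<close>.  If they are distinct, the
  divided difference \<open>(\<Delta>\<^sub>r(r\<^sub>1) - \<Delta>\<^sub>r(r\<^sub>2))/(r\<^sub>1 - r\<^sub>2)\<close> vanishes; if they coincide,
  \<open>\<Delta>\<^sub>r'(r\<^sub>1)\<close> vanishes.  In both cases this expresses the mass parameter through the
  horizons: \<open>2m = (r\<^sub>1 + r\<^sub>2)(1 + \<lambda>a\<^sup>2 + \<lambda>(r\<^sub>1\<^sup>2 + r\<^sub>2\<^sup>2))\<close>, and \<open>\<Delta>\<^sub>r(r\<^sub>1) = 0\<close> expresses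
  \<open>q\<^sup>2\<close> in the same way.  Substituting both into \<open>4m\<^sup>2a\<^sup>2 + q\<^sup>4\<close> gives a polynomial identity
  in \<open>r\<^sub>1, r\<^sub>2, a, \<lambda>\<close>; dividing by \<open>\<Xi>\<^sup>4\<close> yields the area formula.
\<close>

lemma KNAdS_Delta_r_eq:
  "KNAdS_Delta_r lam m a q = (\<lambda>r. lam * r^4 + (1 + lam * a^2) * r^2 - 2 * m * r + (a^2 + q^2))"
  by (rule ext) (simp add: KNAdS_Delta_r_def algebra_simps power2_eq_square power4_eq_xxxx)

lemma KNAdS_Delta_r_has_real_derivative:
  "(KNAdS_Delta_r lam m a q has_real_derivative
      4 * lam * r^3 + 2 * (1 + lam * a^2) * r - 2 * m) (at r)"
  unfolding KNAdS_Delta_r_eq by (rule derivative_eq_intros refl | simp)+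

lemma KNAdS_Delta_r_diff:
  "KNAdS_Delta_r lam m a q r1 - KNAdS_Delta_r lam m a q r2 =
     (r1 - r2) * (lam * (r1 + r2) * (r1^2 + r2^2) + (1 + lam * a^2) * (r1 + r2) - 2 * m)"
  unfolding KNAdS_Delta_r_def by algebra

lemma KNAdS_mass_from_horizons:
  assumes "KNAdS_Delta_r lam m a q r1 = 0" and "KNAdS_Delta_r lam m a q r2 = 0"
    and "r1 = r2 \<longrightarrow> (KNAdS_Delta_r lam m a q has_real_derivative 0) (at r1)"
  shows "2 * m = (r1 + r2) * (1 + lam * a^2 + lam * (r1^2 + r2^2))"
proof (cases "r1 = r2")
  case True
  then have "4 * lam * r1^3 + 2 * (1 + lam * a^2) * r1 - 2 * m = 0"
    using DERIV_unique[OF KNAdS_Delta_r_has_real_derivative] assms(3) by blast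
  with True show ?thesis by (simp add: algebra_simps power2_eq_square power3_eq_cube)
next
  case False
  have "(r1 - r2) * (lam * (r1 + r2) * (r1^2 + r2^2) + (1 + lam * a^2) * (r1 + r2) - 2 * m) = 0"
    using KNAdS_Delta_r_diff[of lam m a q r1 r2] assms(1,2) by simp
  with False have "lam * (r1 + r2) * (r1^2 + r2^2) + (1 + lam * a^2) * (r1 + r2) - 2 * m = 0"
    by simp
  then show ?thesis by (simp add: algebra_simps)
qed

lemma KNAdS_charge_from_horizon:
  assumes "KNAdS_Delta_r lam m a q r = 0"
  shows "q^2 = 2 * m * r - (r^2 + a^2) * (1 + lam * r^2)"
  using assms unfolding KNAdS_Delta_r_def by algebra

lemma horizon_area_identity:
  fixes lam m a c r1 r2 :: real
  assumes "2 * m = (r1 + r2) * (1 + lam * a^2 + lam * (r1^2 + r2^2))"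
    and "c = 2 * m * r1 - (r1^2 + a^2) * (1 + lam * r1^2)"
  defines "A \<equiv> r1^2 + a^2" and "B \<equiv> r2^2 + a^2" and "X \<equiv> 1 - lam * a^2"
  shows "4 * m^2 * a^2 + c^2 =
     A * B * (X^2 + 2 * lam * (X * (A + B) + c) + lam^2 * (A^2 + A * B + B^2))"
  using assms by algebra

lemma horizon_area_identity_reduced:
  fixes lam m a q X A B :: real
  assumes "X \<noteq> 0"
    and "4 * m^2 * a^2 + (q^2)^2 =
       A * B * (X^2 + 2 * lam * (X * (A + B) + q^2) + lam^2 * (A^2 + A * B + B^2))"
  shows "4 * (m * a / X^2)^2 + (q / X)^4 =
     A / X * (B / X) * (1 + 2 * lam * (A / X + B / X + (q / X)^2)
       + lam^2 * ((A / X)^2 + A / X * (B / X) + (B / X)^2))"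
proof -
  have "4 * (m * a / X^2)^2 + (q / X)^4 = (4 * m^2 * a^2 + (q^2)^2) / X^4"
    using assms(1) by (simp add: power_divide power_mult_distrib field_simps)
  also have "\<dots> = A * B * (X^2 + 2 * lam * (X * (A + B) + q^2) + lam^2 * (A^2 + A * B + B^2)) / X^4"
    using assms(2) by simp
  also have "\<dots> = A / X * (B / X) * (1 + 2 * lam * (A / X + B / X + (q / X)^2)
       + lam^2 * ((A / X)^2 + A / X * (B / X) + (B / X)^2))"
    using assms(1) by (simp add: power_divide field_simps power2_eq_square power4_eq_xxxx)
  finally show ?thesis .
qed

theorem mainTheorem1:
  fixes lam m a q r1 r2 :: real
  assumes lam_pos: "lam > 0"
    and rot: "lam * a^2 < 1"
    and r_order: "r1 \<le> r2"
    and zero1: "KNAdS_Delta_r lam m a q r1 = 0"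
    and zero2: "KNAdS_Delta_r lam m a q r2 = 0"
    and all_zeros: "\<forall>r. KNAdS_Delta_r lam m a q r = 0 \<longrightarrow> r = r1 \<or> r = r2"
    and double: "r1 = r2 \<longrightarrow> (KNAdS_Delta_r lam m a q has_real_derivative 0) (at r1)"
  shows "4 * (KNAdS_J lam m a)^2 + (KNAdS_Q lam a q)^4 =
      KNAdS_reduced_area lam a r1 * KNAdS_reduced_area lam a r2 *
      (1 + 2 * lam * (KNAdS_reduced_area lam a r1 + KNAdS_reduced_area lam a r2 + (KNAdS_Q lam a q)^2)
         + lam^2 * ((KNAdS_reduced_area lam a r1)^2
                    + KNAdS_reduced_area lam a r1 * KNAdS_reduced_area lam a r2
                    + (KNAdS_reduced_area lam a r2)^2))"
proof -
  have Xi: "KNAdS_Xi lam a \<noteq> 0"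
    using rot by (simp add: KNAdS_Xi_def)
  have "4 * m^2 * a^2 + (q^2)^2 =
      (r1^2 + a^2) * (r2^2 + a^2) * ((KNAdS_Xi lam a)^2
        + 2 * lam * (KNAdS_Xi lam a * ((r1^2 + a^2) + (r2^2 + a^2)) + q^2)
        + lam^2 * ((r1^2 + a^2)^2 + (r1^2 + a^2) * (r2^2 + a^2) + (r2^2 + a^2)^2))"
    unfolding KNAdS_Xi_def
    by (rule horizon_area_identity[OF KNAdS_mass_from_horizons[OF zero1 zero2 double]
          KNAdS_charge_from_horizon[OF zero1]])
  from horizon_area_identity_reduced[OF Xi this] show ?thesis
    unfolding KNAdS_J_def KNAdS_Q_def KNAdS_reduced_area_def .
qed

end
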